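(* Let $m\ge2$, $n\ge2$ and $\mathcal{I}\subseteq\mathbb{R}^{m\times n}$ any set of instances of the goods allocation problem. An allocation function $A$ over $\mathcal{I}$ is proportionable (in the goods sense) if and only if for every $v\in\mathcal{I}$, $\sum_{i\in[m]}v_i(A(v)_i)\ge\frac1m\sum_{i\in[m]}v_i([n])$.
   Context: Goods allocation: $m$ agents $[m]$, $n$ goods $[n]$; an instance is a matrix $v$ with $v_{i,j}$ the value of agent $i$ for good $j$, and $v_i(S)=\sum_{j\in S}v_{i,j}$. An allocation is a tuple $(A_1,\dots,A_m)$ of pairwise disjoint subsets of $[n]$ with union $[n]$. A mechanism $(A,q)$ over $\mathcal{I}$ assigns to each $v$ an allocation $A(v)$ and transfers $q(v)\in\mathbb{R}^m$; agent $i$'s utility is $v_i(A_i)-q_i$. It is proportional if for every $v\in\mathcal{I}$ and $i\in[m]$: $v_i(A_i)-q_i\ge\frac1m\sum_{j\in[m]}(v_i(A_j)-q_j)$. An allocation function $A$ is proportionable if some transfer function $q$ makes $(A,q)$ proportional. *)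

theory Defs
  imports "HOL-Analysis.Analysis"
begin

text \<open>Agents are the elements of a finite type 'm (so m = CARD('m)), goods the elements
of a finite type 'n (n = CARD('n)). An instance is a matrix v :: real^'n^'m, with
v $ i $ j the value of agent i for good j.\<close>

definition bundle_val :: "real^'n::finite^'m::finite \<Rightarrow> 'm \<Rightarrow> 'n set \<Rightarrow> real" where
  "bundle_val v i S = (\<Sum>j\<in>S. v $ i $ j)"

definition is_allocation :: "('m::finite \<Rightarrow> 'n::finite set) \<Rightarrow> bool" where
  "is_allocation X \<longleftrightarrow> (\<forall>i k. i \<noteq> k \<longrightarrow> X i \<inter> X k = {}) \<and> (\<Union>i. X i) = UNIV"

definition allocation_function ::
  "(real^'n::finite^'m::finite) set \<Rightarrow> (real^'n^'m \<Rightarrow> 'm \<Rightarrow> 'n set) \<Rightarrow> bool" where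
  "allocation_function I A \<longleftrightarrow> (\<forall>v\<in>I. is_allocation (A v))"

definition proportional_mech ::
  "(real^'n::finite^'m::finite) set \<Rightarrow> (real^'n^'m \<Rightarrow> 'm \<Rightarrow> 'n set) \<Rightarrow> (real^'n^'m \<Rightarrow> 'm \<Rightarrow> real) \<Rightarrow> bool" where
  "proportional_mech I A q \<longleftrightarrow>
     (\<forall>v\<in>I. \<forall>i. bundle_val v i (A v i) - q v i
         \<ge> (1 / real CARD('m)) * (\<Sum>k\<in>UNIV. bundle_val v i (A v k) - q v k))"

definition proportionable ::
  "(real^'n::finite^'m::finite) set \<Rightarrow> (real^'n^'m \<Rightarrow> 'm \<Rightarrow> 'n set) \<Rightarrow> bool" where
  "proportionable I A \<longleftrightarrow> (\<exists>q. proportional_mech I A q)"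

end

theory Submission
  imports Defs
begin

text \<open>Since the bundles of an allocation partition the goods, agent i's proportionality
condition reads a i - q i \<ge> (t i - Q) / m, with a i the value of i's own bundle, t i the
value of all goods and Q the total transfer. Summing over i shows that the social welfare
must reach (\<Sum>i. t i) / m; conversely, if it does, the transfers q i = a i - t i / m have
Q \<ge> 0 and leave every agent exactly t i / m.\<close>

lemma sum_bundle_val_allocation:
  assumes "is_allocation X"
  shows "(\<Sum>k\<in>UNIV. bundle_val v i (X k)) = bundle_val v i UNIV"
proof -
  have disjoint: "\<forall>k\<in>UNIV. \<forall>l\<in>UNIV. k \<noteq> l \<longrightarrow> X k \<inter> X l = {}"
    and covering: "(\<Union>k. X k) = UNIV"
    using assms unfolding is_allocation_def by auto
  have "bundle_val v i UNIV = (\<Sum>j\<in>(\<Union>k. X k). v $ i $ j)"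
    using covering unfolding bundle_val_def by simp
  also have "\<dots> = (\<Sum>k\<in>UNIV. \<Sum>j\<in>X k. v $ i $ j)"
    by (rule sum.UNION_disjoint) (use disjoint in auto)
  finally show ?thesis
    unfolding bundle_val_def by simp
qed

lemma proportional_mech_iff:
  fixes I :: "(real^'n::finite^'m::finite) set"
  assumes "allocation_function I A"
  shows "proportional_mech I A q \<longleftrightarrow>
    (\<forall>v\<in>I. \<forall>i. bundle_val v i (A v i) - q v i
              \<ge> (bundle_val v i UNIV - (\<Sum>k\<in>UNIV. q v k)) / real CARD('m))"
proof -
  have "(\<Sum>k\<in>UNIV. bundle_val v i (A v k) - q v k) = bundle_val v i UNIV - (\<Sum>k\<in>UNIV. q v k)"
    if "v \<in> I" for v i
    using assms that sum_bundle_val_allocation[of "A v" v i]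
    by (simp add: allocation_function_def sum_subtractf)
  then show ?thesis
    unfolding proportional_mech_def by auto
qed

lemma balancing_transfers_exist_iff:
  fixes a t :: "'i::finite \<Rightarrow> real"
  shows "(\<exists>q. \<forall>i. a i - q i \<ge> (t i - sum q UNIV) / real CARD('i))
           \<longleftrightarrow> sum a UNIV \<ge> sum t UNIV / real CARD('i)"
proof
  assume "\<exists>q. \<forall>i. a i - q i \<ge> (t i - sum q UNIV) / real CARD('i)"
  then obtain q where q: "\<And>i. a i - q i \<ge> (t i - sum q UNIV) / real CARD('i)"
    by blast
  have "sum a UNIV - sum q UNIV = (\<Sum>i\<in>UNIV. a i - q i)"
    by (simp add: sum_subtractf)
  also have "\<dots> \<ge> (\<Sum>i\<in>UNIV. (t i - sum q UNIV) / real CARD('i))"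
    by (rule sum_mono) (rule q)
  also have "(\<Sum>i\<in>UNIV. (t i - sum q UNIV) / real CARD('i)) = sum t UNIV / real CARD('i) - sum q UNIV"
    by (simp add: sum_subtractf diff_divide_distrib flip: sum_divide_distrib)
  finally show "sum a UNIV \<ge> sum t UNIV / real CARD('i)"
    by simp
next
  assume welfare: "sum a UNIV \<ge> sum t UNIV / real CARD('i)"
  define q where "q i = a i - t i / real CARD('i)" for i
  have "sum q UNIV = sum a UNIV - sum t UNIV / real CARD('i)"
    by (simp add: q_def sum_subtractf sum_divide_distrib)
  with welfare have "sum q UNIV \<ge> 0"
    by simp
  then have "\<forall>i. a i - q i \<ge> (t i - sum q UNIV) / real CARD('i)"
    by (simp add: q_def divide_right_mono)
  then show "\<exists>q. \<forall>i. a i - q i \<ge> (t i - sum q UNIV) / real CARD('i)"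
    by blast
qed

theorem mainTheorem7:
  fixes I :: "(real^'n::finite^'m::finite) set"
    and A :: "real^'n^'m \<Rightarrow> 'm \<Rightarrow> 'n set"
  assumes "CARD('m) \<ge> 2" and "CARD('n) \<ge> 2"
    and "allocation_function I A"
  shows "proportionable I A \<longleftrightarrow>
    (\<forall>v\<in>I. (\<Sum>i\<in>UNIV. bundle_val v i (A v i))
             \<ge> (1 / real CARD('m)) * (\<Sum>i\<in>UNIV. bundle_val v i UNIV))"
proof -
  let ?P = "\<lambda>v r. \<forall>i. bundle_val v i (A v i) - r i
                      \<ge> (bundle_val v i UNIV - sum r UNIV) / real CARD('m)"
  have "proportionable I A \<longleftrightarrow> (\<exists>q. \<forall>v\<in>I. ?P v (q v))"
    unfolding proportionable_def using proportional_mech_iff[OF assms(3)] by blast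
  also have "\<dots> \<longleftrightarrow> (\<forall>v\<in>I. \<exists>r. ?P v r)"
    by (metis (no_types, lifting) bchoice)
  also have "\<dots> \<longleftrightarrow> (\<forall>v\<in>I. (\<Sum>i\<in>UNIV. bundle_val v i (A v i))
                              \<ge> (\<Sum>i\<in>UNIV. bundle_val v i UNIV) / real CARD('m))"
    by (simp only: balancing_transfers_exist_iff)
  finally show ?thesis
    by simp
qed

end
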